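(* On $\mathcal H=\mathbb C^2$ with orthonormal basis $|0\rangle,|1\rangle$, let $P_1=\frac12|0\rangle\langle0|$ and $P_2=\frac12|0\rangle\langle0|+|1\rangle\langle1|$. The POVM $\{P_1,P_2\}$ is not extremal, while the instrument $\mathcal N_i(\rho)=\sqrt{P_i}\,\rho\,\sqrt{P_i}$, $i=1,2$, is an extremal instrument.
   Context: A POVM is a family of positive operators summing to the identity; an extremal POVM is an extreme point of the convex set of POVMs with the same number of outcomes. An instrument with $M$ outcomes is a family of completely positive maps $\mathcal N_i:\mathcal L(\mathcal H)\to\mathcal L(\mathcal H)$ whose sum is trace preserving; extremal means an extreme point of the convex set of all such instruments with $M$ outcomes. *)

theory Defs
  imports "HOL-Analysis.Analysis"
begin

text \<open>Operators on H = C^2 are 2x2 complex matrices of type complex^2^2,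
  the basis vectors |0>, |1> are indexed by (0::2), (1::2).\<close>

type_synonym op2 = "complex^2^2"

definition ketbra :: "2 \<Rightarrow> op2" where
  "ketbra k = (\<chi> i j. if i = k \<and> j = k then 1 else 0)"

definition cscale :: "complex \<Rightarrow> op2 \<Rightarrow> op2" where
  "cscale c A = (\<chi> i j. c * A $ i $ j)"

definition qform :: "op2 \<Rightarrow> complex^2 \<Rightarrow> complex" where
  "qform A x = (\<Sum>i\<in>UNIV. \<Sum>j\<in>UNIV. cnj (x $ i) * A $ i $ j * x $ j)"

definition positive_op :: "op2 \<Rightarrow> bool" where
  "positive_op A \<longleftrightarrow> (\<forall>x. qform A x \<in> \<real> \<and> Re (qform A x) \<ge> 0)"

definition op_sqrt :: "op2 \<Rightarrow> op2" where
  "op_sqrt A = (THE B. positive_op B \<and> B ** B = A)"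

definition is_povm :: "nat \<Rightarrow> (nat \<Rightarrow> op2) \<Rightarrow> bool" where
  "is_povm M P \<longleftrightarrow> (\<forall>i\<in>{1..M}. positive_op (P i)) \<and> (\<Sum>i\<in>{1..M}. P i) = mat 1"

definition extremal_povm :: "nat \<Rightarrow> (nat \<Rightarrow> op2) \<Rightarrow> bool" where
  "extremal_povm M P \<longleftrightarrow> is_povm M P \<and>
     (\<forall>Q R (t::real). is_povm M Q \<and> is_povm M R \<and> 0 < t \<and> t < 1 \<and>
        (\<forall>i\<in>{1..M}. P i = t *\<^sub>R Q i + (1 - t) *\<^sub>R R i)
        \<longrightarrow> (\<forall>i\<in>{1..M}. Q i = P i \<and> R i = P i))"

definition clinear_map :: "(op2 \<Rightarrow> op2) \<Rightarrow> bool" where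
  "clinear_map N \<longleftrightarrow> (\<forall>A B c. N (A + B) = N A + N B \<and> N (cscale c A) = cscale c (N A))"

text \<open>Positivity of a k x k block operator matrix [X a b] (a,b < k) in M_k(L(H)) = L(C^k (x) H).\<close>
definition block_positive :: "nat \<Rightarrow> (nat \<Rightarrow> nat \<Rightarrow> op2) \<Rightarrow> bool" where
  "block_positive k X \<longleftrightarrow> (\<forall>v :: nat \<Rightarrow> complex^2.
     (\<Sum>a<k. \<Sum>b<k. \<Sum>i\<in>UNIV. \<Sum>j\<in>UNIV. cnj (v a $ i) * X a b $ i $ j * v b $ j) \<in> \<real> \<and>
     Re (\<Sum>a<k. \<Sum>b<k. \<Sum>i\<in>UNIV. \<Sum>j\<in>UNIV. cnj (v a $ i) * X a b $ i $ j * v b $ j) \<ge> 0)"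

text \<open>Completely positive: linear and id_k (x) N positive for every k.\<close>
definition completely_positive :: "(op2 \<Rightarrow> op2) \<Rightarrow> bool" where
  "completely_positive N \<longleftrightarrow> clinear_map N \<and>
     (\<forall>k X. block_positive k X \<longrightarrow> block_positive k (\<lambda>a b. N (X a b)))"

definition is_instrument :: "nat \<Rightarrow> (nat \<Rightarrow> op2 \<Rightarrow> op2) \<Rightarrow> bool" where
  "is_instrument M N \<longleftrightarrow> (\<forall>i\<in>{1..M}. completely_positive (N i)) \<and>
     (\<forall>\<rho>. trace (\<Sum>i\<in>{1..M}. N i \<rho>) = trace \<rho>)"

definition extremal_instrument :: "nat \<Rightarrow> (nat \<Rightarrow> op2 \<Rightarrow> op2) \<Rightarrow> bool" where
  "extremal_instrument M N \<longleftrightarrow> is_instrument M N \<and>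
     (\<forall>Q R (t::real). is_instrument M Q \<and> is_instrument M R \<and> 0 < t \<and> t < 1 \<and>
        (\<forall>i\<in>{1..M}. N i = (\<lambda>\<rho>. t *\<^sub>R Q i \<rho> + (1 - t) *\<^sub>R R i \<rho>))
        \<longrightarrow> (\<forall>i\<in>{1..M}. Q i = N i \<and> R i = N i))"

end

theory Submission
  imports Defs
begin

text \<open>
  The POVM {P1, P2} is the midpoint of the two POVMs {|0><0|, |1><1|} and {0, 1},
  so it is not extremal.  For the instrument, both operators P_i are diagonal, hence
  N_i(rho) = K_i rho K_i with diagonal Kraus operators K_1 = diag(1/sqrt 2, 0) and
  K_2 = diag(1/sqrt 2, 1).  The Choi form of such a map, (u, w) |-> <<K|u>>^* <<K|w>>, has rank one.
  If N_i = t Q_i + (1 - t) R_i with completely positive Q_i, R_i, then the positive Choi form of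
  Q_i vanishes on the orthogonal complement of the vectorised Kraus operator; by the
  Cauchy-Schwarz property of positive 2x2 matrices it then vanishes against everything there,
  so Q_i = c_i N_i.  Trace preservation of Q forces c_1 = c_2 = 1, and likewise for R.
\<close>

lemma UNIV_2_eq: "(UNIV::2 set) = {0, 1}"
  by (metis UNIV_2 exhaust_2 insert_commute zero_neq_one)

lemma sum_UNIV_2: "(\<Sum>i\<in>UNIV. f i) = f (0::2) + f 1"
  by (simp add: UNIV_2_eq)

lemma forall_2: "(\<forall>i::2. P i) \<longleftrightarrow> P 0 \<and> P 1"
  by (metis UNIV_2_eq UNIV_I insertE singletonD)

lemma cases_2: "(i::2) = 0 \<or> i = 1"
  using UNIV_2_eq by auto

lemma sum_lessThan_2: "(\<Sum>a<(2::nat). f a) = f 0 + f 1"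
  by (simp add: numeral_2_eq_2)

lemma sum_1_2: "(\<Sum>i\<in>{1..2::nat}. f i) = f 1 + f 2"
proof -
  have "{1..2::nat} = {1, 2}" by auto
  then show ?thesis by simp
qed

lemma ball_1_2: "(\<forall>i\<in>{1..2::nat}. P i) \<longleftrightarrow> P 1 \<and> P 2"
  by (auto simp: le_Suc_eq numeral_2_eq_2)

lemma op2_eq_iff: "A = B \<longleftrightarrow> A$0$0 = B$0$0 \<and> A$0$1 = B$0$1 \<and> A$1$0 = B$1$0 \<and> A$1$1 = B$1$1"
  for A B :: op2
  by (simp add: vec_eq_iff forall_2)

lemma trace_op2: "trace (A::op2) = A$0$0 + A$1$1"
  by (simp add: trace_def sum_UNIV_2)

definition psd2 :: "complex \<Rightarrow> complex \<Rightarrow> complex \<Rightarrow> complex \<Rightarrow> bool" where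
  "psd2 A B C D \<longleftrightarrow> (\<forall>x y. cnj x * A * x + cnj x * B * y + cnj y * C * x + cnj y * D * y \<in> \<real> \<and>
     0 \<le> Re (cnj x * A * x + cnj x * B * y + cnj y * C * x + cnj y * D * y))"

lemma psd2_entries:
  assumes "psd2 A B C D"
  shows "A = of_real (Re A)" "0 \<le> Re A" "D = of_real (Re D)" "0 \<le> Re D" "C = cnj B"
proof -
  note H = assms[unfolded psd2_def, rule_format]
  have a: "Im A = 0" "0 \<le> Re A" using H[of 1 0] by (auto simp: complex_is_Real_iff)
  have d: "Im D = 0" "0 \<le> Re D" using H[of 0 1] by (auto simp: complex_is_Real_iff)
  have re: "Im (A + B + C + D) = 0" using H[of 1 1] by (auto simp: complex_is_Real_iff)
  have im: "Im (A - \<i> * B + \<i> * C + D) = 0" using H[of "\<i>" 1] by (auto simp: complex_is_Real_iff)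
  show "A = of_real (Re A)" "0 \<le> Re A" "D = of_real (Re D)" "0 \<le> Re D"
    using a d by (simp_all add: complex_eq_iff)
  show "C = cnj B" using a d re im by (simp add: complex_eq_iff)
qed

(* Cauchy-Schwarz for positive 2x2 matrices: a zero diagonal entry kills its row and column. *)
lemma psd2_zero_diag:
  assumes psd: "psd2 A B C D" and A0: "A = 0"
  shows "B = 0 \<and> C = 0"
proof -
  have C: "C = cnj B" by (rule psd2_entries(5)[OF psd])
  have "B = 0"
  proof (rule ccontr)
    assume "B \<noteq> 0"
    define m where "m = (cmod B)\<^sup>2"
    have m: "m > 0" using \<open>B \<noteq> 0\<close> by (simp add: m_def)
    define s where "s = (Re D + 1) / (2 * m)"
    have BB: "cnj B * B = of_real m"
      unfolding m_def complex_norm_square by (simp add: mult.commute)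
    have "0 \<le> Re (cnj (- of_real s * B) * A * (- of_real s * B) + cnj (- of_real s * B) * B * 1
                  + cnj 1 * C * (- of_real s * B) + cnj 1 * D * 1)"
      using psd unfolding psd2_def by blast
    also have "\<dots> = Re (D - 2 * of_real s * (cnj B * B))"
      using A0 C by (simp add: algebra_simps)
    also have "\<dots> = Re D - 2 * s * m" unfolding BB by simp
    also have "\<dots> = -1" using m by (simp add: s_def field_simps)
    finally show False by simp
  qed
  then show ?thesis using C by simp
qed

lemma psd2_diag:
  assumes "0 \<le> a" "0 \<le> d"
  shows "psd2 (of_real a) 0 0 (of_real d)"
proof -
  have "cnj x * of_real a * x + cnj y * of_real d * y = of_real (a * (cmod x)\<^sup>2 + d * (cmod y)\<^sup>2)"
    for x y :: complex
    by (simp only: of_real_add of_real_mult complex_norm_square) (simp add: algebra_simps)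
  then show ?thesis using assms unfolding psd2_def by simp
qed

lemma convex_comb_zero:
  fixes q s :: complex and t :: real
  assumes "q \<in> \<real>" "0 \<le> Re q" "s \<in> \<real>" "0 \<le> Re s" "0 < t" "t < 1"
    and "of_real t * q + of_real (1 - t) * s = 0"
  shows "q = 0"
proof -
  have "t * Re q + (1 - t) * Re s = 0"
    using arg_cong[OF assms(7), of Re] by simp
  then have "Re q = 0"
    using assms(2,4,5,6) by (smt (verit) mult_nonneg_nonneg mult_pos_pos)
  then show ?thesis using assms(1) by (simp add: complex_eq_iff complex_is_Real_iff)
qed

lemma positive_op_iff_psd2:
  "positive_op M \<longleftrightarrow> psd2 (M$0$0) (M$0$1) (M$1$0) (M$1$1)"
proof -
  have q: "qform M v = cnj (v$0) * M$0$0 * v$0 + cnj (v$0) * M$0$1 * v$1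
                        + cnj (v$1) * M$1$0 * v$0 + cnj (v$1) * M$1$1 * v$1" for v
    by (simp add: qform_def sum_UNIV_2)
  show ?thesis
    unfolding positive_op_def psd2_def q
    apply (intro iffI allI)
    subgoal for x y by (drule spec[of _ "\<chi> k::2. if k = 0 then x else y"]) simp
    subgoal for v by blast
    done
qed

lemma matrix_mult_op2: "(A ** B) $ i $ j = A$i$0 * B$0$j + A$i$1 * B$1$j" for A B :: op2
  by (simp add: matrix_matrix_mult_def sum_UNIV_2)

definition diag_op :: "(2 \<Rightarrow> real) \<Rightarrow> op2" where
  "diag_op d = (\<chi> i j. if i = j then of_real (d i) else 0)"

lemma diag_op_mult: "diag_op d ** diag_op e = diag_op (\<lambda>i. d i * e i)"
  unfolding op2_eq_iff by (simp add: matrix_mult_op2 diag_op_def)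

lemma positive_diag_op:
  assumes "\<And>i. 0 \<le> d i"
  shows "positive_op (diag_op d)"
  unfolding positive_op_iff_psd2 using psd2_diag[OF assms assms] by (simp add: diag_op_def)

(* A positive square root of a diagonal operator is the entrywise square root: the off-diagonal
   entry b satisfies b (a + e) = 0, and a + e = 0 would make B vanish on its diagonal. *)
lemma positive_op_sqrt_unique:
  assumes pos: "positive_op B" and sq: "B ** B = diag_op d"
  shows "B = diag_op (\<lambda>i. sqrt (d i))"
proof -
  have psd: "psd2 (B$0$0) (B$0$1) (B$1$0) (B$1$1)" using pos positive_op_iff_psd2 by blast
  define a where "a = Re (B$0$0)"
  define e where "e = Re (B$1$1)"
  define b where "b = B$0$1"
  have B: "B$0$0 = of_real a" "B$1$1 = of_real e" "B$0$1 = b" "B$1$0 = cnj b" "0 \<le> a" "0 \<le> e"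
    using psd2_entries[OF psd] unfolding a_def e_def b_def by simp_all
  have off: "b * of_real (a + e) = 0"
    using arg_cong[OF sq, of "\<lambda>M. M$0$1"] by (simp add: matrix_mult_op2 diag_op_def B algebra_simps)
  have b0: "b = 0"
  proof (rule ccontr)
    assume "b \<noteq> 0"
    then have "complex_of_real (a + e) = 0" using off by simp
    then have "a + e = 0" by (simp only: of_real_eq_0_iff)
    then have "a = 0" using \<open>0 \<le> a\<close> \<open>0 \<le> e\<close> by simp
    then show False using psd2_zero_diag[OF psd] B \<open>b \<noteq> 0\<close> by simp
  qed
  have "of_real (a * a) = (of_real (d 0) :: complex)" "of_real (e * e) = (of_real (d 1) :: complex)"
    using arg_cong[OF sq, of "\<lambda>M. M$0$0"] arg_cong[OF sq, of "\<lambda>M. M$1$1"]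
    by (simp_all add: matrix_mult_op2 diag_op_def B b0)
  then have "a * a = d 0" "e * e = d 1" by (simp_all only: of_real_eq_iff)
  then have "a = sqrt (d 0)" "e = sqrt (d 1)"
    using B(5,6) real_sqrt_unique[of a "d 0"] real_sqrt_unique[of e "d 1"]
    by (simp_all add: power2_eq_square)
  then show ?thesis unfolding op2_eq_iff using B b0 by (simp add: diag_op_def)
qed

lemma op_sqrt_diag_op:
  assumes "\<And>i. 0 \<le> d i"
  shows "op_sqrt (diag_op d) = diag_op (\<lambda>i. sqrt (d i))"
  unfolding op_sqrt_def
proof (rule the_equality)
  show "positive_op (diag_op (\<lambda>i. sqrt (d i))) \<and>
        diag_op (\<lambda>i. sqrt (d i)) ** diag_op (\<lambda>i. sqrt (d i)) = diag_op d"
    using assms by (simp add: positive_diag_op diag_op_mult)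
qed (use positive_op_sqrt_unique in blast)

definition kraus_map :: "(2 \<Rightarrow> real) \<Rightarrow> op2 \<Rightarrow> op2" where
  "kraus_map k \<rho> = diag_op k ** \<rho> ** diag_op k"

lemma kraus_map_entry: "kraus_map k \<rho> $ i $ j = of_real (k i) * \<rho>$i$j * of_real (k j)"
  using cases_2[of i] cases_2[of j]
  by (elim disjE) (simp_all add: kraus_map_def matrix_mult_op2 diag_op_def)

lemma trace_kraus_map:
  "trace (kraus_map k \<rho>) = of_real ((k 0)\<^sup>2) * \<rho>$0$0 + of_real ((k 1)\<^sup>2) * \<rho>$1$1"
  by (simp add: trace_op2 kraus_map_entry power2_eq_square algebra_simps)

definition unit_op :: "nat \<Rightarrow> nat \<Rightarrow> op2" where
  "unit_op a b = (\<chi> i j. if i = of_nat a \<and> j = of_nat b then 1 else 0)"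

(* Basis vector |a> (x) |i> of C^2 (x) C^2, indexing the first factor by naturals a < 2. *)
definition basis_vec :: "nat \<Rightarrow> 2 \<Rightarrow> nat \<Rightarrow> complex^2" where
  "basis_vec a i = (\<lambda>c. \<chi> k. if c = a \<and> k = i then 1 else 0)"

(* The Choi form of a map N: the sesquilinear form of the block matrix [N(|a><b|)]_{a,b}.
   Complete positivity of N makes it positive. *)
definition choi :: "(op2 \<Rightarrow> op2) \<Rightarrow> (nat \<Rightarrow> complex^2) \<Rightarrow> (nat \<Rightarrow> complex^2) \<Rightarrow> complex" where
  "choi N u w = (\<Sum>a<2. \<Sum>b<2. \<Sum>i\<in>UNIV. \<Sum>j\<in>UNIV. cnj (u a $ i) * N (unit_op a b) $ i $ j * w b $ j)"

lemma choi_linear_left: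
  "choi N (\<lambda>a. x *s u a + y *s u' a) w = cnj x * choi N u w + cnj y * choi N u' w"
  by (simp add: choi_def sum_lessThan_2 sum_UNIV_2 algebra_simps)

lemma choi_linear_right:
  "choi N u (\<lambda>a. x *s w a + y *s w' a) = x * choi N u w + y * choi N u w'"
  by (simp add: choi_def sum_lessThan_2 sum_UNIV_2 algebra_simps)

lemma choi_convex:
  assumes "\<And>\<rho>. N \<rho> = t *\<^sub>R Q \<rho> + (1 - t) *\<^sub>R R \<rho>"
  shows "choi N u w = of_real t * choi Q u w + of_real (1 - t) * choi R u w"
proof -
  have entry: "N \<rho> $ i $ j = of_real t * Q \<rho> $ i $ j + of_real (1 - t) * R \<rho> $ i $ j" for \<rho> i j
    by (simp add: assms scaleR_conv_of_real[where 'a=complex])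
  show ?thesis
    unfolding choi_def entry
    by (simp add: sum.distrib sum_distrib_left ring_distribs mult.assoc mult.left_commute)
qed

lemma choi_basis:
  assumes "a < 2" "b < 2"
  shows "choi N (basis_vec a i) (basis_vec b j) = N (unit_op a b) $ i $ j"
  using assms cases_2[of i] cases_2[of j]
  by (auto simp: choi_def basis_vec_def sum_lessThan_2 sum_UNIV_2 less_2_cases_iff)

(* The block matrix of matrix units [|a><b|]_{a,b} is positive (it is a rank-one projector
   up to scaling), so the Choi form of a completely positive map is positive. *)
lemma unit_op_block_positive: "block_positive 2 unit_op"
  unfolding block_positive_def
proof
  fix v :: "nat \<Rightarrow> complex^2"
  define z where "z = v 0 $ 0 + v 1 $ 1"
  have "(\<Sum>a<2. \<Sum>b<2. \<Sum>i\<in>UNIV. \<Sum>j\<in>UNIV. cnj (v a $ i) * unit_op a b $ i $ j * v b $ j)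
        = cnj z * z"
    by (simp add: z_def sum_lessThan_2 sum_UNIV_2 unit_op_def algebra_simps)
  also have "\<dots> = of_real ((cmod z)\<^sup>2)"
    unfolding complex_norm_square by (rule mult.commute)
  finally show "(\<Sum>a<2. \<Sum>b<2. \<Sum>i\<in>UNIV. \<Sum>j\<in>UNIV. cnj (v a $ i) * unit_op a b $ i $ j * v b $ j) \<in> \<real> \<and>
        0 \<le> Re (\<Sum>a<2. \<Sum>b<2. \<Sum>i\<in>UNIV. \<Sum>j\<in>UNIV. cnj (v a $ i) * unit_op a b $ i $ j * v b $ j)"
    by simp
qed

lemma choi_nonneg:
  assumes "completely_positive N"
  shows "choi N v v \<in> \<real> \<and> 0 \<le> Re (choi N v v)"
  using assms unit_op_block_positive
  unfolding completely_positive_def block_positive_def choi_def by blast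

lemma choi_psd2:
  assumes "completely_positive N"
  shows "psd2 (choi N u u) (choi N u w) (choi N w u) (choi N w w)"
  unfolding psd2_def
proof (intro allI)
  fix x y :: complex
  let ?v = "\<lambda>a. x *s u a + y *s w a"
  have "choi N ?v ?v = cnj x * choi N u u * x + cnj x * choi N u w * y
                       + cnj y * choi N w u * x + cnj y * choi N w w * y"
    by (simp add: choi_linear_left choi_linear_right algebra_simps)
  then show "cnj x * choi N u u * x + cnj x * choi N u w * y + cnj y * choi N w u * x + cnj y * choi N w w * y \<in> \<real> \<and>
      0 \<le> Re (cnj x * choi N u u * x + cnj x * choi N u w * y + cnj y * choi N w u * x + cnj y * choi N w w * y)"
    using choi_nonneg[OF assms, of ?v] by simp
qed

lemma choi_null:
  assumes "completely_positive N" "choi N u u = 0"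
  shows "choi N u w = 0" "choi N w u = 0"
  using psd2_zero_diag[OF choi_psd2[OF assms(1)] assms(2)] by simp_all

lemma kraus_map_cp: "completely_positive (kraus_map k)"
  unfolding completely_positive_def
proof
  show "clinear_map (kraus_map k)"
    unfolding clinear_map_def by (simp add: vec_eq_iff kraus_map_entry cscale_def algebra_simps)
  show "\<forall>n X. block_positive n X \<longrightarrow> block_positive n (\<lambda>a b. kraus_map k (X a b))"
  proof (intro allI impI)
    fix n X assume bp: "block_positive n X"
    show "block_positive n (\<lambda>a b. kraus_map k (X a b))"
      unfolding block_positive_def
    proof
      fix v :: "nat \<Rightarrow> complex^2"
      define w where "w = (\<lambda>a. \<chi> i. of_real (k i) * v a $ i)"
      have "(\<Sum>a<n. \<Sum>b<n. \<Sum>i\<in>UNIV. \<Sum>j\<in>UNIV. cnj (v a $ i) * kraus_map k (X a b) $ i $ j * v b $ j)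
          = (\<Sum>a<n. \<Sum>b<n. \<Sum>i\<in>UNIV. \<Sum>j\<in>UNIV. cnj (w a $ i) * X a b $ i $ j * w b $ j)"
        unfolding kraus_map_entry w_def by (intro sum.cong refl) (simp add: algebra_simps)
      then show "(\<Sum>a<n. \<Sum>b<n. \<Sum>i\<in>UNIV. \<Sum>j\<in>UNIV. cnj (v a $ i) * kraus_map k (X a b) $ i $ j * v b $ j) \<in> \<real> \<and>
         0 \<le> Re (\<Sum>a<n. \<Sum>b<n. \<Sum>i\<in>UNIV. \<Sum>j\<in>UNIV. cnj (v a $ i) * kraus_map k (X a b) $ i $ j * v b $ j)"
        using bp unfolding block_positive_def by metis
    qed
  qed
qed

(* The overlap <<K|u>> of u with the vectorised Kraus operator K = diag_op k. *)
definition kraus_overlap :: "(2 \<Rightarrow> real) \<Rightarrow> (nat \<Rightarrow> complex^2) \<Rightarrow> complex" where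
  "kraus_overlap k u = (\<Sum>a<2. of_real (k (of_nat a)) * u a $ of_nat a)"

lemma kraus_overlap_linear:
  "kraus_overlap k (\<lambda>a. x *s u a + y *s w a) = x * kraus_overlap k u + y * kraus_overlap k w"
  by (simp add: kraus_overlap_def sum_lessThan_2 algebra_simps)

lemma choi_kraus_map: "choi (kraus_map k) u w = cnj (kraus_overlap k u) * kraus_overlap k w"
  by (simp add: choi_def kraus_overlap_def kraus_map_entry unit_op_def
      sum_lessThan_2 sum_UNIV_2 algebra_simps)

lemma clinear_map_eq_on_units:
  assumes "clinear_map Q" "clinear_map N" "\<And>a b. a < 2 \<Longrightarrow> b < 2 \<Longrightarrow> Q (unit_op a b) = N (unit_op a b)"
  shows "Q = N"
proof
  fix \<rho> :: op2
  have decomp: "\<rho> = cscale (\<rho>$0$0) (unit_op 0 0) + cscale (\<rho>$0$1) (unit_op 0 1)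
                  + cscale (\<rho>$1$0) (unit_op 1 0) + cscale (\<rho>$1$1) (unit_op 1 1)"
    unfolding op2_eq_iff by (simp add: cscale_def unit_op_def)
  show "Q \<rho> = N \<rho>"
    by (subst (1 2) decomp) (use assms in \<open>simp add: clinear_map_def\<close>)
qed

lemma scaled_kraus_map_clinear: "clinear_map (\<lambda>\<rho>. cscale c (kraus_map k \<rho>))"
  unfolding clinear_map_def by (simp add: vec_eq_iff cscale_def kraus_map_entry algebra_simps)

(* Every u with <<K|u>> = 0
   has zero Choi norm for Q, hence the Choi form of Q factors through the overlap with K. *)
lemma kraus_map_extreme_ray:
  assumes Q: "completely_positive Q" and R: "completely_positive R" and t: "0 < t" "t < 1"
    and split: "\<And>\<rho>. kraus_map k \<rho> = t *\<^sub>R Q \<rho> + (1 - t) *\<^sub>R R \<rho>"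
    and k: "\<exists>i. k i \<noteq> 0"
  shows "\<exists>c. Q = (\<lambda>\<rho>. cscale c (kraus_map k \<rho>))"
proof -
  have null: "choi Q u w = 0" "choi Q w u = 0" if "kraus_overlap k u = 0" for u w
  proof -
    have "of_real t * choi Q u u + of_real (1 - t) * choi R u u = choi (kraus_map k) u u"
      using choi_convex[OF split] by simp
    also have "\<dots> = 0" using that by (simp add: choi_kraus_map)
    finally have "choi Q u u = 0"
      using convex_comb_zero[of "choi Q u u" "choi R u u" t] choi_nonneg[OF Q] choi_nonneg[OF R] t
      by simp
    then show "choi Q u w = 0" "choi Q w u = 0" using choi_null[OF Q] by blast+
  qed
  define kv :: "nat \<Rightarrow> complex^2" where "kv = (\<lambda>a. \<chi> i. if i = of_nat a then of_real (k i) else 0)"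
  define n where "n = (k 0)\<^sup>2 + (k 1)\<^sup>2"
  have n: "n \<noteq> 0"
  proof -
    obtain i where "k i \<noteq> 0" using k by blast
    then show ?thesis using cases_2[of i] unfolding n_def by (auto simp: sum_power2_eq_zero_iff)
  qed
  have overlap_kv: "kraus_overlap k kv = of_real n"
    by (simp add: kraus_overlap_def kv_def n_def sum_lessThan_2 power2_eq_square)
  define \<alpha> where "\<alpha> u = kraus_overlap k u / of_real n" for u
  have orth: "kraus_overlap k (\<lambda>a. 1 *s u a + (- \<alpha> u) *s kv a) = 0" for u
    unfolding kraus_overlap_linear overlap_kv \<alpha>_def using n by simp
  have left: "choi Q u w = cnj (\<alpha> u) * choi Q kv w" for u w
    using null(1)[OF orth[of u], of w] unfolding choi_linear_left by simp
  have right: "choi Q kv w = \<alpha> w * choi Q kv kv" for w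
    using null(2)[OF orth[of w], of kv] unfolding choi_linear_right by simp
  define c where "c = choi Q kv kv / of_real (n * n)"
  have choi_Q: "choi Q u w = c * choi (kraus_map k) u w" for u w
  proof -
    have "choi Q u w = cnj (\<alpha> u) * (\<alpha> w * choi Q kv kv)"
      by (simp only: left[of u w] right[of w])
    then show ?thesis
      using n by (simp add: choi_kraus_map c_def \<alpha>_def)
  qed
  have "Q = (\<lambda>\<rho>. cscale c (kraus_map k \<rho>))"
  proof (rule clinear_map_eq_on_units)
    show "clinear_map Q" using Q completely_positive_def by blast
    show "clinear_map (\<lambda>\<rho>. cscale c (kraus_map k \<rho>))" by (rule scaled_kraus_map_clinear)
    fix a b :: nat assume "a < 2" "b < 2"
    then show "Q (unit_op a b) = cscale c (kraus_map k (unit_op a b))"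
      using choi_Q by (simp add: vec_eq_iff cscale_def choi_basis[symmetric])
  qed
  then show ?thesis ..
qed

(* The diagonals of the POVM elements P_1 = diag(1/2, 0) and P_2 = diag(1/2, 1), and the
   diagonals of their square roots, the Kraus operators of the instrument. *)
definition example_weight :: "nat \<Rightarrow> 2 \<Rightarrow> real" where
  "example_weight m i = (if i = 0 then 1/2 else if m = 1 then 0 else 1)"

definition example_kraus :: "nat \<Rightarrow> 2 \<Rightarrow> real" where
  "example_kraus m i = sqrt (example_weight m i)"

lemma example_weight_nonneg: "0 \<le> example_weight m i"
  by (simp add: example_weight_def)

lemma trace_example_kraus:
  "trace (kraus_map (example_kraus m) \<rho>) = \<rho>$0$0 / 2 + (if m = 1 then 0 else \<rho>$1$1)"
  by (simp add: trace_kraus_map example_kraus_def example_weight_def)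

lemma trace_cscale: "trace (cscale c A) = c * trace A"
  by (simp add: trace_op2 cscale_def algebra_simps)

lemma example_instrument: "is_instrument 2 (\<lambda>m. kraus_map (example_kraus m))"
  unfolding is_instrument_def sum_1_2
  by (simp add: kraus_map_cp trace_add trace_example_kraus) (simp add: trace_op2)

(* Trace preservation of c_1 N_1 + c_2 N_2 forces c_1 = c_2 = 1 (test on |1><1| and |0><0|). *)
lemma example_scalars:
  assumes "\<And>\<rho>. trace (cscale c1 (kraus_map (example_kraus 1) \<rho>) + cscale c2 (kraus_map (example_kraus 2) \<rho>)) = trace \<rho>"
  shows "c1 = 1" "c2 = 1"
proof -
  have "c2 = 1"
    using assms[of "unit_op 1 1"] by (simp add: trace_add trace_cscale trace_example_kraus)
      (simp add: trace_op2 unit_op_def)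
  moreover have "c1 / 2 + c2 / 2 = 1"
    using assms[of "unit_op 0 0"] by (simp add: trace_add trace_cscale trace_example_kraus)
      (simp add: trace_op2 unit_op_def)
  ultimately show "c1 = 1" "c2 = 1" by (simp_all add: field_simps)
qed

lemma example_decomposition_trivial:
  assumes Q: "is_instrument 2 Q" and R: "is_instrument 2 R" and t: "0 < t" "t < 1"
    and split: "\<And>m \<rho>. m \<in> {1, 2} \<Longrightarrow> kraus_map (example_kraus m) \<rho> = t *\<^sub>R Q m \<rho> + (1 - t) *\<^sub>R R m \<rho>"
  shows "Q 1 = kraus_map (example_kraus 1)" "Q 2 = kraus_map (example_kraus 2)"
proof -
  have cp: "completely_positive (Q m)" "completely_positive (R m)" if "m \<in> {1, 2}" for m
    using that Q R unfolding is_instrument_def by auto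
  have nonzero: "\<exists>i. example_kraus m i \<noteq> 0" for m
    by (rule exI[of _ 0]) (simp add: example_kraus_def example_weight_def)
  have "\<exists>c. Q m = (\<lambda>\<rho>. cscale c (kraus_map (example_kraus m) \<rho>))" if "m \<in> {1, 2}" for m
    using kraus_map_extreme_ray[OF cp[OF that] t split[OF that] nonzero] .
  then obtain c1 c2 where
    c1: "Q 1 = (\<lambda>\<rho>. cscale c1 (kraus_map (example_kraus 1) \<rho>))" and
    c2: "Q 2 = (\<lambda>\<rho>. cscale c2 (kraus_map (example_kraus 2) \<rho>))"
    by blast
  have "trace (Q 1 \<rho> + Q 2 \<rho>) = trace \<rho>" for \<rho>
    using Q unfolding is_instrument_def sum_1_2 by blast
  then have "c1 = 1" "c2 = 1" unfolding c1 c2 by (rule example_scalars)+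
  then show "Q 1 = kraus_map (example_kraus 1)" "Q 2 = kraus_map (example_kraus 2)"
    using c1 c2 by (simp_all add: cscale_def)
qed

lemma example_instrument_extremal:
  assumes N: "N 1 = kraus_map (example_kraus 1)" "N 2 = kraus_map (example_kraus 2)"
  shows "extremal_instrument 2 N"
  unfolding extremal_instrument_def
proof (intro conjI allI impI)
  show "is_instrument 2 N"
    using example_instrument N unfolding is_instrument_def sum_1_2 ball_1_2 by simp
  fix Q R t
  assume "is_instrument 2 Q \<and> is_instrument 2 R \<and> 0 < t \<and> t < 1 \<and>
          (\<forall>i\<in>{1..2}. N i = (\<lambda>\<rho>. t *\<^sub>R Q i \<rho> + (1 - t) *\<^sub>R R i \<rho>))"
  then have Q: "is_instrument 2 Q" and R: "is_instrument 2 R" and t: "0 < t" "t < 1"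
    and NQR: "N 1 = (\<lambda>\<rho>. t *\<^sub>R Q 1 \<rho> + (1 - t) *\<^sub>R R 1 \<rho>)"
             "N 2 = (\<lambda>\<rho>. t *\<^sub>R Q 2 \<rho> + (1 - t) *\<^sub>R R 2 \<rho>)"
    unfolding ball_1_2 by auto
  have split: "kraus_map (example_kraus m) \<rho> = t *\<^sub>R Q m \<rho> + (1 - t) *\<^sub>R R m \<rho>"
    if "m \<in> {1, 2}" for m \<rho>
    using that fun_cong[OF trans[OF N(1)[symmetric] NQR(1)]] fun_cong[OF trans[OF N(2)[symmetric] NQR(2)]]
    by auto
  have split': "kraus_map (example_kraus m) \<rho> = (1 - t) *\<^sub>R R m \<rho> + (1 - (1 - t)) *\<^sub>R Q m \<rho>"
    if "m \<in> {1, 2}" for m \<rho>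
    using split[OF that] by simp
  show "\<forall>i\<in>{1..2}. Q i = N i \<and> R i = N i"
    using example_decomposition_trivial[OF Q R t split]
          example_decomposition_trivial[OF R Q _ _ split'] t N
    unfolding ball_1_2 by simp
qed

(* The POVM {P_1, P_2} is the midpoint of {|0><0|, |1><1|} and {0, 1}. *)
lemma example_povm_not_extremal:
  assumes P: "P 1 = diag_op (example_weight 1)" "P 2 = diag_op (example_weight 2)"
  shows "\<not> extremal_povm 2 P"
proof
  assume extremal: "extremal_povm 2 P"
  define Q :: "nat \<Rightarrow> op2" where "Q m = diag_op (\<lambda>i. if (i = 0) = (m = 1) then 1 else 0)" for m
  define R :: "nat \<Rightarrow> op2" where "R m = diag_op (\<lambda>i. if m = 1 then 0 else 1)" for m
  have "positive_op (Q m)" "positive_op (R m)" for m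
    unfolding Q_def R_def by (rule positive_diag_op, simp)+
  moreover have "Q 1 + Q 2 = mat 1" "R 1 + R 2 = mat 1"
    unfolding Q_def R_def by (simp_all add: op2_eq_iff diag_op_def mat_def)
  ultimately have "is_povm 2 Q" "is_povm 2 R"
    unfolding is_povm_def ball_1_2 sum_1_2 by simp_all
  moreover have "\<forall>m\<in>{1..2}. P m = (1/2::real) *\<^sub>R Q m + (1 - 1/2) *\<^sub>R R m"
    unfolding ball_1_2 P Q_def R_def
    by (simp add: op2_eq_iff diag_op_def example_weight_def scaleR_conv_of_real[where 'a=complex])
  moreover have "0 < (1/2::real)" "(1/2::real) < 1" by simp_all
  ultimately have "Q 1 = P 1"
    using extremal[unfolded extremal_povm_def, THEN conjunct2, rule_format, of Q R "1/2" 1] by auto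
  then show False
    unfolding P Q_def by (simp add: op2_eq_iff diag_op_def example_weight_def)
qed

theorem mainTheorem18:
  fixes P :: "nat \<Rightarrow> op2"
  assumes "P 1 = (1/2) *\<^sub>R ketbra 0"
    and "P 2 = (1/2) *\<^sub>R ketbra 0 + ketbra 1"
  shows "\<not> extremal_povm 2 P \<and>
         extremal_instrument 2 (\<lambda>i \<rho>. op_sqrt (P i) ** \<rho> ** op_sqrt (P i))"
proof
  have P: "P 1 = diag_op (example_weight 1)" "P 2 = diag_op (example_weight 2)"
    using assms
    by (simp_all add: op2_eq_iff diag_op_def ketbra_def example_weight_def scaleR_conv_of_real[where 'a=complex])
  then show "\<not> extremal_povm 2 P" by (rule example_povm_not_extremal)
  have "op_sqrt (P m) = diag_op (example_kraus m)" if "m \<in> {1, 2}" for m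
    using that P op_sqrt_diag_op[OF example_weight_nonneg] unfolding example_kraus_def by auto
  then show "extremal_instrument 2 (\<lambda>i \<rho>. op_sqrt (P i) ** \<rho> ** op_sqrt (P i))"
    by (intro example_instrument_extremal) (simp_all add: kraus_map_def [abs_def])
qed

end
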